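(* For each integer $l\ge0$, define $$R_l(z)=2i\,p_l(z)p_l(-z)+p_l'(z)p_l(-z)+p_l'(-z)p_l(z)+2i\,z^{2l}.$$ Then $R_l(z)=0$ identically, and consequently $$G_l(z)-G_l(-z)=-2i\,z^{2l+1}\,\frac{1}{p_l(z)\,p_l(-z)}.$$
   Context: $p_l(z)=\sum_{n=0}^l\frac{i^{-n-1}}{2^{l-n}}\frac{(2l-n)!}{(l-n)!\,n!}z^n$, so that the outgoing spherical Hankel function is $h_l^{(1)}(z)=z^{-l-1}p_l(z)e^{iz}$; $p_l'$ is the derivative of $p_l$. $G_l(z)=z\,\partial h_l^{(1)}(z)/h_l^{(1)}(z)$. *)

theory Defs
  imports "HOL-Analysis.Analysis"
begin

definition p_poly :: "nat \<Rightarrow> complex \<Rightarrow> complex" where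
  "p_poly l z = (\<Sum>n=0..l. (\<i> powi (- int n - 1) / 2 ^ (l - n))
      * (fact (2*l - n) / (fact (l - n) * fact n)) * z ^ n)"

definition hankel1 :: "nat \<Rightarrow> complex \<Rightarrow> complex" where
  "hankel1 l z = z powi (- int l - 1) * p_poly l z * exp (\<i> * z)"

definition G_fun :: "nat \<Rightarrow> complex \<Rightarrow> complex" where
  "G_fun l z = z * deriv (hankel1 l) z / hankel1 l z"

definition R_fun :: "nat \<Rightarrow> complex \<Rightarrow> complex" where
  "R_fun l z = 2 * \<i> * p_poly l z * p_poly l (-z)
     + deriv (p_poly l) z * p_poly l (-z) + deriv (p_poly l) (-z) * p_poly l z
     + 2 * \<i> * z ^ (2*l)"

end

theory Submission imports Defs "HOL-Computational_Algebra.Polynomial" begin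

text \<open>The coefficients of \<open>p = p\<^sub>l\<close> satisfy a two-term recurrence which says that
  \<open>z p'' + (2iz - 2l) p' = 2il p\<close>, the spherical Bessel equation for \<open>h\<^sub>l\<close> with the factor
  \<open>z^(-l-1) e^(iz)\<close> removed. Combining this equation at \<open>z\<close> and at \<open>-z\<close> shows that the polynomial
  \<open>T(z) = 2i p(z) p(-z) + p'(z) p(-z) + p'(-z) p(z)\<close> satisfies the Euler equation \<open>z T' = 2l T\<close>,
  so \<open>T\<close> is a multiple of \<open>z^(2l)\<close>; the leading coefficients give \<open>T(z) = -2i z^(2l)\<close>.
  The formula for \<open>G\<^sub>l(z) - G\<^sub>l(-z)\<close> then follows from \<open>G\<^sub>l(z) = z p'(z)/p(z) + iz - (l+1)\<close>.\<close>

lemma monom_if_euler_ode: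
  fixes p :: "'a::{idom,ring_char_0} poly"
  assumes "pCons 0 (pderiv p) = smult (of_nat n) p"
  shows "p = monom (coeff p n) n"
proof (rule poly_eqI)
  fix k
  have "coeff (pCons 0 (pderiv p)) k = coeff (smult (of_nat n) p) k"
    using assms by simp
  then have "(of_nat k - of_nat n) * coeff p k = 0"
    by (cases k) (simp_all add: coeff_pderiv algebra_simps)
  then have "k \<noteq> n \<Longrightarrow> coeff p k = 0"
    by simp
  then show "coeff p k = coeff (monom (coeff p n) n) k"
    by (auto simp: coeff_monom)
qed

lemma coeff_pderiv_mult_degree_sum:
  fixes p q :: "'a::{idom,ring_char_0} poly"
  shows "coeff (pderiv p * q) (degree p + degree q) = 0"
proof (cases "degree p = 0")
  case True
  then have "pderiv p = 0" by (simp add: pderiv_eq_0_iff)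
  then show ?thesis by simp
next
  case False
  have "degree (pderiv p * q) \<le> (degree p - 1) + degree q"
    using degree_mult_le[of "pderiv p" q] by (simp add: degree_pderiv)
  then show ?thesis
    using False by (intro coeff_eq_0) simp
qed

definition neg_arg_poly :: "'a::comm_ring_1 poly \<Rightarrow> 'a poly" where
  "neg_arg_poly p = pcompose p [:0, -1:]"

lemma
  fixes p :: "'a::idom poly"
  shows poly_neg_arg_poly [simp]: "poly (neg_arg_poly p) z = poly p (- z)"
  and poly_pderiv_neg_arg_poly [simp]: "poly (pderiv (neg_arg_poly p)) z = - poly (pderiv p) (- z)"
  and poly_pderiv2_neg_arg_poly [simp]:
    "poly (pderiv (pderiv (neg_arg_poly p))) z = poly (pderiv (pderiv p)) (- z)"
  by (simp_all add: neg_arg_poly_def poly_pcompose pderiv_pcompose pderiv_mult pderiv_pCons pderiv_minus)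

lemma degree_neg_arg_poly [simp]:
  fixes p :: "'a::idom poly"
  shows "degree (neg_arg_poly p) = degree p"
  by (simp add: neg_arg_poly_def degree_pcompose)

lemma lead_coeff_neg_arg_poly:
  fixes p :: "'a::idom poly"
  shows "lead_coeff (neg_arg_poly p) = (- 1) ^ degree p * lead_coeff p"
  by (simp add: neg_arg_poly_def lead_coeff_comp)

text \<open>Up to the factor \<open>(-1)^l z^(-2l-2)\<close>, \<open>poly (hankel_wronskian p\<^sub>l)\<close> is the Wronskian of
  \<open>h\<^sub>l(z)\<close> and \<open>h\<^sub>l(-z)\<close>, which explains why it is a monomial.\<close>
definition hankel_wronskian :: "complex poly \<Rightarrow> complex poly" where
  "hankel_wronskian p = smult (2 * \<i>) (p * neg_arg_poly p)
     + pderiv p * neg_arg_poly p - p * pderiv (neg_arg_poly p)"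

lemma poly_hankel_wronskian:
  "poly (hankel_wronskian p) z
     = 2 * \<i> * poly p z * poly p (- z) + poly (pderiv p) z * poly p (- z) + poly (pderiv p) (- z) * poly p z"
  by (simp add: hankel_wronskian_def algebra_simps)

lemma coeff_hankel_wronskian_top:
  "coeff (hankel_wronskian p) (2 * degree p) = 2 * \<i> * (- 1) ^ degree p * lead_coeff p ^ 2"
proof -
  let ?q = "neg_arg_poly p"
  have n: "2 * degree p = degree p + degree ?q"
    by simp
  have "coeff (p * ?q) (degree p + degree ?q) = (- 1) ^ degree p * lead_coeff p ^ 2"
    unfolding coeff_mult_degree_sum lead_coeff_neg_arg_poly by (simp add: power2_eq_square)
  moreover have "coeff (pderiv ?q * p) (degree ?q + degree p) = 0"
    by (rule coeff_pderiv_mult_degree_sum)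
  moreover have "coeff (pderiv p * ?q) (degree p + degree ?q) = 0"
    by (rule coeff_pderiv_mult_degree_sum)
  ultimately show ?thesis
    unfolding n hankel_wronskian_def coeff_diff coeff_add coeff_smult
    by (simp only: mult.commute[of p "pderiv ?q"] add.commute[of "degree ?q"]) simp
qed

lemma hankel_wronskian_euler_ode:
  assumes ode: "\<And>w. w * poly (pderiv (pderiv p)) w + (2 * \<i> * w - 2 * of_nat l) * poly (pderiv p) w
                   = 2 * \<i> * of_nat l * poly p w"
  shows "pCons 0 (pderiv (hankel_wronskian p)) = smult (of_nat (2 * l)) (hankel_wronskian p)"
proof (rule poly_eq_poly_eq_iff[THEN iffD1], rule ext)
  fix z :: complex
  define a b c where "a = poly p z" and "b = poly (pderiv p) z" and "c = poly (pderiv (pderiv p)) z"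
  define A B C where "A = poly p (- z)" and "B = poly (pderiv p) (- z)"
    and "C = poly (pderiv (pderiv p)) (- z)"
  have ode_z: "z * c + (2 * \<i> * z - 2 * of_nat l) * b = 2 * \<i> * of_nat l * a"
    unfolding a_def b_def c_def by (rule ode)
  have ode_neg_z: "- z * C + (- 2 * \<i> * z - 2 * of_nat l) * B = 2 * \<i> * of_nat l * A"
    using ode[of "- z"] unfolding A_def B_def C_def by simp
  have "poly (pCons 0 (pderiv (hankel_wronskian p))) z = z * (2 * \<i> * (b * A - a * B) + c * A - a * C)"
    by (simp add: hankel_wronskian_def pderiv_mult pderiv_smult pderiv_add pderiv_diff
        a_def b_def c_def A_def B_def C_def algebra_simps)
  also have "\<dots> = A * (z * c + (2 * \<i> * z - 2 * of_nat l) * b)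
      + a * (- z * C + (- 2 * \<i> * z - 2 * of_nat l) * B) + 2 * of_nat l * (b * A + a * B)"
    by (simp add: algebra_simps)
  also have "\<dots> = poly (smult (of_nat (2 * l)) (hankel_wronskian p)) z"
    unfolding ode_z ode_neg_z by (simp add: poly_hankel_wronskian a_def b_def A_def B_def algebra_simps)
  finally show "poly (pCons 0 (pderiv (hankel_wronskian p))) z
      = poly (smult (of_nat (2 * l)) (hankel_wronskian p)) z" .
qed

definition hankel_coeff :: "nat \<Rightarrow> nat \<Rightarrow> complex" where
  "hankel_coeff l n = (\<i> powi (- int n - 1) / 2 ^ (l - n)) * (fact (2*l - n) / (fact (l - n) * fact n))"

definition hankel_poly :: "nat \<Rightarrow> complex poly" where
  "hankel_poly l = (\<Sum>n\<le>l. monom (hankel_coeff l n) n)"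

lemma coeff_hankel_poly: "coeff (hankel_poly l) k = (if k \<le> l then hankel_coeff l k else 0)"
  unfolding hankel_poly_def coeff_sum by (auto simp: coeff_monom)

lemma poly_hankel_poly: "poly (hankel_poly l) = p_poly l"
  by (rule ext) (simp add: hankel_poly_def p_poly_def poly_sum poly_monom hankel_coeff_def atLeast0AtMost)

lemma deriv_p_poly: "deriv (p_poly l) z = poly (pderiv (hankel_poly l)) z"
  unfolding poly_hankel_poly[symmetric] by (rule DERIV_imp_deriv) (rule poly_DERIV)

lemma degree_hankel_poly: "degree (hankel_poly l) = l"
  and lead_coeff_hankel_poly: "lead_coeff (hankel_poly l) = \<i> powi (- int l - 1)"
proof -
  have top: "coeff (hankel_poly l) l = \<i> powi (- int l - 1)"
    by (simp add: coeff_hankel_poly hankel_coeff_def mult_2)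
  have "degree (hankel_poly l) \<le> l"
    by (rule degree_le) (auto simp: coeff_hankel_poly)
  moreover have "l \<le> degree (hankel_poly l)"
    by (rule le_degree) (simp add: top)
  ultimately show deg: "degree (hankel_poly l) = l" by simp
  show "lead_coeff (hankel_poly l) = \<i> powi (- int l - 1)"
    using top deg by simp
qed

lemma i_powi_neg_square: "(\<i> powi (- int l - 1)) ^ 2 = (- 1) ^ (l + 1)"
proof -
  have "- int l - 1 = - int (l + 1)" by simp
  then have "\<i> powi (- int l - 1) = inverse (\<i> ^ (l + 1))"
    by (simp only: power_int_minus power_int_of_nat)
  also have "\<dots> = - \<i> * (- \<i>) ^ l"
    by (simp add: power_inverse[symmetric])
  finally have "\<i> powi (- int l - 1) = - \<i> * (- \<i>) ^ l" .
  moreover have "(- \<i>) ^ l * (- \<i>) ^ l = (- 1 :: complex) ^ l"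
    by (simp add: power_mult_distrib[symmetric])
  ultimately show ?thesis
    by (simp add: power2_eq_square algebra_simps)
qed

lemma hankel_coeff_recurrence:
  assumes "k < l"
  shows "of_nat (k + 1) * (of_nat k - 2 * of_nat l) * hankel_coeff l (k + 1)
           + 2 * \<i> * (of_nat k - of_nat l) * hankel_coeff l k = 0"
proof -
  obtain d where l: "l = k + 1 + d"
    using assms by (metis add.commute less_imp_Suc_add plus_1_eq_Suc add_Suc_right add_Suc_shift)
  have diffs: "l - k = Suc d" "l - (k + 1) = d" "2 * l - k = Suc (l + d)" "2 * l - (k + 1) = l + d"
    using l by auto
  have i_powi_step: "\<i> powi (- int (k + 1) - 1) = - \<i> * \<i> powi (- int k - 1)"
    using power_int_add[of \<i> "- int k - 1" "-1"] by (simp add: algebra_simps)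
  define F x where "F = (fact (l + d) :: complex)" and "x = \<i> powi (- int k - 1)"
  have next_coeff: "hankel_coeff l (k + 1) = (- \<i> * x) / 2 ^ d * (F / (fact d * (of_nat (k + 1) * fact k)))"
    unfolding hankel_coeff_def diffs i_powi_step F_def x_def by (simp add: fact_Suc)
  have this_coeff: "hankel_coeff l k
      = x / (2 * 2 ^ d) * (of_nat (Suc (l + d)) * F / ((of_nat (Suc d) * fact d) * fact k))"
    unfolding hankel_coeff_def diffs F_def x_def by (simp only: fact_Suc) simp
  have factors: "(of_nat k - 2 * of_nat l :: complex) = - of_nat (Suc (l + d))"
    "(of_nat k - of_nat l :: complex) = - of_nat (Suc d)"
    using l by simp_all
  have "(1 + of_nat k :: complex) \<noteq> 0" "(1 + of_nat d :: complex) \<noteq> 0"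
    by (metis add.commute of_nat_Suc of_nat_eq_0_iff nat.distinct(1))+
  then show ?thesis
    unfolding next_coeff this_coeff factors by (simp add: field_simps del: of_nat_Suc)
qed

lemma hankel_poly_ode:
  "w * poly (pderiv (pderiv (hankel_poly l))) w + (2 * \<i> * w - 2 * of_nat l) * poly (pderiv (hankel_poly l)) w
     = 2 * \<i> * of_nat l * poly (hankel_poly l) w"
proof -
  let ?p = "hankel_poly l"
  let ?ode = "pCons 0 (pderiv (pderiv ?p)) + [:- 2 * of_nat l, 2 * \<i>:] * pderiv ?p - smult (2 * \<i> * of_nat l) ?p"
  have "?ode = 0"
  proof (rule poly_eqI)
    fix n
    have coeff_ode: "coeff ?ode n = of_nat (n + 1) * (of_nat n - 2 * of_nat l) * coeff ?p (n + 1)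
                                   + 2 * \<i> * (of_nat n - of_nat l) * coeff ?p n"
      by (cases n) (simp_all add: coeff_pderiv algebra_simps)
    show "coeff ?ode n = coeff 0 n"
    proof (cases "n < l")
      case True
      then show ?thesis
        unfolding coeff_ode using hankel_coeff_recurrence[OF True] by (simp add: coeff_hankel_poly)
    next
      case False
      then show ?thesis
        unfolding coeff_ode by (cases "n = l") (auto simp: coeff_hankel_poly)
    qed
  qed
  from arg_cong[OF this, of "\<lambda>q. poly q w"] show ?thesis
    by (simp add: algebra_simps)
qed

lemma hankel_wronskian_hankel_poly: "hankel_wronskian (hankel_poly l) = monom (- 2 * \<i>) (2 * l)"
proof -
  have "(- 1) ^ l * lead_coeff (hankel_poly l) ^ 2 = (- 1 :: complex)"
    unfolding lead_coeff_hankel_poly i_powi_neg_square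
    by (simp add: power_add[symmetric] flip: power_mult_distrib)
  then have "coeff (hankel_wronskian (hankel_poly l)) (2 * l) = - 2 * \<i>"
    using coeff_hankel_wronskian_top[of "hankel_poly l"] by (simp add: degree_hankel_poly)
  with monom_if_euler_ode[OF hankel_wronskian_euler_ode[OF hankel_poly_ode]] show ?thesis
    by metis
qed

lemma R_fun_eq_0: "R_fun l z = 0"
  using arg_cong[OF hankel_wronskian_hankel_poly, of "\<lambda>q. poly q z"]
  by (simp add: R_fun_def poly_hankel_wronskian poly_hankel_poly deriv_p_poly poly_monom algebra_simps)

lemma hankel1_eq: "hankel1 l w = p_poly l w * exp (\<i> * w) / w ^ Suc l"
proof -
  have "- int l - 1 = - int (Suc l)" by simp
  then have "w powi (- int l - 1) = inverse (w ^ Suc l)"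
    by (simp only: power_int_minus power_int_of_nat)
  then show ?thesis
    by (simp add: hankel1_def divide_inverse)
qed

lemma G_fun_eq:
  assumes "z \<noteq> 0" and "p_poly l z \<noteq> 0"
  shows "G_fun l z = z * deriv (p_poly l) z / p_poly l z + \<i> * z - of_nat (Suc l)"
proof -
  define a b e where "a = p_poly l z" and "b = deriv (p_poly l) z" and "e = exp (\<i> * z)"
  have dp: "(p_poly l has_field_derivative b) (at z)"
    using poly_DERIV[of "hankel_poly l" z] by (simp add: b_def deriv_p_poly poly_hankel_poly)
  have de: "((\<lambda>w. exp (\<i> * w)) has_field_derivative \<i> * e) (at z)"
    unfolding e_def by (auto intro!: derivative_eq_intros)
  have dpow: "((\<lambda>w. w ^ Suc l) has_field_derivative of_nat (Suc l) * z ^ l) (at z)"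
    using DERIV_power[OF DERIV_ident, of "Suc l" z UNIV] by simp
  have "(hankel1 l has_field_derivative
      ((b * e + \<i> * e * a) * z ^ Suc l - a * e * (of_nat (Suc l) * z ^ l)) / (z ^ Suc l * z ^ Suc l)) (at z)"
    unfolding hankel1_eq[abs_def] using DERIV_divide[OF DERIV_mult[OF dp de] dpow] assms(1)
    by (simp add: a_def e_def)
  then have "G_fun l z = z * (((b * e + \<i> * e * a) * z ^ Suc l - a * e * (of_nat (Suc l) * z ^ l))
      / (z ^ Suc l * z ^ Suc l)) / (a * e / z ^ Suc l)"
    unfolding G_fun_def by (simp add: DERIV_imp_deriv hankel1_eq a_def e_def)
  also have "\<dots> = z * b / a + \<i> * z - of_nat (Suc l)"
    using assms by (simp add: a_def e_def field_simps)
  finally show ?thesis by (simp add: a_def b_def)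
qed

theorem lemma8p4:
  fixes l :: nat
  shows "(\<forall>z. R_fun l z = 0) \<and>
    (\<forall>z. z \<noteq> 0 \<and> p_poly l z \<noteq> 0 \<and> p_poly l (-z) \<noteq> 0 \<longrightarrow>
        G_fun l z - G_fun l (-z) = - 2 * \<i> * z ^ (2*l+1) * (1 / (p_poly l z * p_poly l (-z))))"
proof (intro conjI allI impI)
  fix z show "R_fun l z = 0" by (rule R_fun_eq_0)
next
  fix z :: complex
  assume nz: "z \<noteq> 0 \<and> p_poly l z \<noteq> 0 \<and> p_poly l (-z) \<noteq> 0"
  define a A b B where "a = p_poly l z" and "A = p_poly l (- z)"
    and "b = deriv (p_poly l) z" and "B = deriv (p_poly l) (- z)"
  have R: "2 * \<i> * a * A + b * A + B * a = - 2 * \<i> * z ^ (2 * l)"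
    using R_fun_eq_0[of l z] unfolding R_fun_def a_def A_def b_def B_def
    by (simp add: algebra_simps eq_neg_iff_add_eq_0)
  have "G_fun l z - G_fun l (- z) = z * b / a + \<i> * z - (- z * B / A - \<i> * z)"
    using G_fun_eq[of z l] G_fun_eq[of "- z" l] nz unfolding a_def A_def b_def B_def by simp
  also have "\<dots> = z * (2 * \<i> * a * A + b * A + B * a) / (a * A)"
    using nz by (simp add: a_def A_def field_simps)
  finally show "G_fun l z - G_fun l (- z) = - 2 * \<i> * z ^ (2 * l + 1) * (1 / (p_poly l z * p_poly l (- z)))"
    unfolding R by (simp add: a_def A_def field_simps)
qed

end
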